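(* Let $F$ be a field of prime characteristic $p$, let $1\le r\le s$, let $m\ge0$ be the smallest integer with $r\le p^m$, let $A=F[X,Y]/(X^r,Y^s)$ with $x,y$ the images of $X,Y$, and regard $A$ as a module over the subalgebra $F[x+y]$. (a) If $s\equiv0\pmod{p^m}$, then $(x+y)^s=0$, $A=\bigoplus_{i=0}^{r-1} x^iF[x+y]$, and $x^i(x+y)^{s-1}\neq 0$ for $0\leq i<r$. Consequently $\varepsilon(r,s,p)=(0,0,\dots,0)$. (b) If $\varepsilon(r,s,p)=(0,0,\dots,0)$, then $s\equiv0\pmod{p^m}$.
   Context: For a positive integer $n$, let $J_n$ denote the $n\times n$ matrix with $1$s in positions $(i,i)$ for $1\le i\le n$ and $(i,i+1)$ for $1\le i<n$, and $0$s elsewhere. For $1\le r\le s$, the Jordan canonical form of $J_r\otimes J_s$ over a field of characteristic $p$ is $J_{\lambda_1}\oplus\cdots\oplus J_{\lambda_r}$ with $\lambda_1\ge\cdots\ge\lambda_r>0$; write $\lambda(r,s,p)=(\lambda_1,\dots,\lambda_r)$. The deviation vector is $\varepsilon(r,s,p)=(\lambda_1-s,\dots,\lambda_r-s)$. *)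

theory Defs
  imports "Jordan_Normal_Form.Jordan_Normal_Form" "HOL-Computational_Algebra.Polynomial"
begin

text \<open>F[X,Y] is modelled as 'a poly poly: polynomials in Y whose coefficients
  are polynomials in X.\<close>

definition varX :: "'a::comm_ring_1 poly poly" where
  "varX = [:[:0, 1:]:]"

definition varY :: "'a::comm_ring_1 poly poly" where
  "varY = [:0, 1:]"

text \<open>Membership in the ideal (X^r, Y^s) of F[X,Y]; two polynomials have the same
  image in A = F[X,Y]/(X^r,Y^s) iff their difference lies in this ideal.\<close>

definition in_ideal_XY :: "nat \<Rightarrow> nat \<Rightarrow> 'a::comm_ring_1 poly poly \<Rightarrow> bool" where
  "in_ideal_XY r s P \<longleftrightarrow> (\<exists>a b. P = a * varX ^ r + b * varY ^ s)"

text \<open>Substitution of x+y into a univariate polynomial f \<in> F[t]; the images of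
  these are exactly the elements of the subalgebra F[x+y] of A.\<close>

definition subst_xy :: "'a::comm_ring_1 poly \<Rightarrow> 'a poly poly" where
  "subst_xy f = poly (map_poly (\<lambda>c. [:[:c:]:]) f) (varX + varY)"

definition direct_sum_decomp :: "'a::comm_ring_1 itself \<Rightarrow> nat \<Rightarrow> nat \<Rightarrow> bool" where
  "direct_sum_decomp _ r s \<longleftrightarrow>
     (\<forall>P :: 'a poly poly. \<exists>f :: nat \<Rightarrow> 'a poly.
        in_ideal_XY r s (P - (\<Sum>i<r. varX ^ i * subst_xy (f i)))) \<and>
     (\<forall>f :: nat \<Rightarrow> 'a poly.
        in_ideal_XY r s (\<Sum>i<r. varX ^ i * subst_xy (f i)) \<longrightarrow>
        (\<forall>i<r. in_ideal_XY r s (varX ^ i * subst_xy (f i))))"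

definition kron_mat :: "'a::times mat \<Rightarrow> 'a mat \<Rightarrow> 'a mat" where
  "kron_mat A B = mat (dim_row A * dim_row B) (dim_col A * dim_col B)
     (\<lambda>(i, j). A $$ (i div dim_row B, j div dim_col B) * B $$ (i mod dim_row B, j mod dim_col B))"

abbreviation J :: "nat \<Rightarrow> 'a::{zero,one} mat" where
  "J n \<equiv> jordan_block n 1"

definition jordan_sizes :: "'a::semiring_1 mat \<Rightarrow> nat list" where
  "jordan_sizes M = rev (sort (map fst (SOME n_as. jordan_nf M n_as)))"

text \<open>lambda(r,s,p), computed over the field 'a (of characteristic p).\<close>
definition lambda_rs :: "'a::field itself \<Rightarrow> nat \<Rightarrow> nat \<Rightarrow> nat list" where
  "lambda_rs _ r s = jordan_sizes (kron_mat (J r) (J s) :: 'a mat)"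

definition eps_rs :: "'a::field itself \<Rightarrow> nat \<Rightarrow> nat \<Rightarrow> int list" where
  "eps_rs T r s = map (\<lambda>l. int l - int s) (lambda_rs T r s)"

end

theory Submission
  imports Defs "HOL-Computational_Algebra.Primes"
    "Jordan_Normal_Form.Jordan_Normal_Form_Existence" "Jordan_Normal_Form.Jordan_Normal_Form_Uniqueness"
begin

text \<open>Ordered suitably, the monomials x^a y^b (a < r, b < s) form a basis of A in which
  J_r \<otimes> J_s acts as multiplication by (1 + x)(1 + y) = 1 + z, where z = x + y + xy.

  If q = p^m divides s = q t, the Frobenius map gives (x + w)^s = (x^q + w^q)^t = 0 in A for
  w = y and for w = y(1 + x), because x^q = 0 and w^s = 0; hence (x + y)^s = z^s = 0. Comparing
  lowest (x + y)-degrees then yields the direct sum decomposition, and the elements x^a z^b form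
  a basis, unitriangular with respect to the monomials, on which 1 + z acts as r Jordan blocks
  of size s.

  Conversely, if all Jordan blocks have size s, then z^s = 0 in A. Writing s = p^v t with p not
  dividing t, the coefficient of x^(p^v) y^(s - p^v) in z^s = (x^(p^v) + y^(p^v) (1 + x)^(p^v))^t
  is t \<noteq> 0, which forces r \<le> p^v, i.e. m \<le> v.\<close>

lemma le_power_Least:
  fixes p r :: nat
  assumes "2 \<le> p"
  shows "r \<le> p ^ (LEAST m. r \<le> p ^ m)"
proof (rule LeastI)
  have "r < 2 ^ r"
    by (rule less_exp)
  also have "\<dots> \<le> p ^ r"
    using assms by (rule power_mono) simp
  finally show "r \<le> p ^ r"
    by simp
qed

lemma div_mod_less_mult:
  fixes i r s :: nat
  assumes "i < r * s"
  shows "i div s < r" and "i mod s < s"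
proof -
  have "0 < s"
    using assms by (cases s) simp_all
  then show "i div s < r" and "i mod s < s"
    using assms by (simp_all add: less_mult_imp_div_less)
qed

lemma mult_add_less_mult:
  fixes c d r s :: nat
  assumes "c < r" and "d < s"
  shows "c * s + d < r * s"
proof -
  have "c * s + d < Suc c * s"
    using assms by simp
  also have "\<dots> \<le> r * s"
    using assms by (intro mult_le_mono1) simp
  finally show ?thesis .
qed

lemma sum_lessThan_mult:
  "(\<Sum>j<r * s. g j) = (\<Sum>c<r. \<Sum>d<s. g (c * s + d :: nat))"
proof (induct r)
  case (Suc r)
  have "(\<Sum>j<m + n. g j) = (\<Sum>j<m. g j) + (\<Sum>d<n. g (m + d))" for m n
    by (induct n) (simp_all add: add.assoc)
  from this[of "r * s" s] show ?case
    using Suc by (simp add: add.commute)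
qed simp

lemma poly_eq_sum_atMost:
  fixes p :: "'a::comm_semiring_1 poly"
  assumes "degree p \<le> N"
  shows "poly p x = (\<Sum>i\<le>N. coeff p i * x ^ i)"
proof -
  have "poly p x = (\<Sum>i\<le>degree p. coeff p i * x ^ i)"
    by (rule poly_altdef)
  also have "\<dots> = (\<Sum>i\<le>N. coeff p i * x ^ i)"
    using assms by (intro sum.mono_neutral_left) (auto simp: coeff_eq_0)
  finally show ?thesis .
qed

lemma power_add_prime_power_mult:
  fixes A B :: "'a::comm_semiring_1"
  assumes "prime CHAR('a)"
  shows "(A + B) ^ (CHAR('a) ^ v * t) =
    (\<Sum>k\<le>t. of_nat (t choose k) * A ^ (CHAR('a) ^ v * k) * B ^ (CHAR('a) ^ v * (t - k)))"
proof -
  have "(A + B) ^ (CHAR('a) ^ v * t) = (A ^ CHAR('a) ^ v + B ^ CHAR('a) ^ v) ^ t"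
    by (simp add: power_mult freshmans_dream' assms)
  also have "\<dots> = (\<Sum>k\<le>t. of_nat (t choose k) * A ^ (CHAR('a) ^ v * k) * B ^ (CHAR('a) ^ v * (t - k)))"
    by (simp add: binomial_ring power_mult)
  finally show ?thesis .
qed

section \<open>Kronecker products and Jordan matrices\<close>

lemma dim_kron_mat [simp]:
  "dim_row (kron_mat A B) = dim_row A * dim_row B"
  "dim_col (kron_mat A B) = dim_col A * dim_col B"
  unfolding kron_mat_def by simp_all

lemma index_kron_mat:
  assumes "i < dim_row A * dim_row B" and "j < dim_col A * dim_col B"
  shows "kron_mat A B $$ (i, j) =
    A $$ (i div dim_row B, j div dim_col B) * B $$ (i mod dim_row B, j mod dim_col B)"
  using assms unfolding kron_mat_def by simp

lemma kron_mat_mult_vec_index: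
  assumes "A \<in> carrier_mat m r" and "B \<in> carrier_mat n s" and "v \<in> carrier_vec (r * s)"
    and "i < m * n"
  shows "(kron_mat A B *\<^sub>v v) $ i =
    (\<Sum>c<r. \<Sum>d<s. A $$ (i div n, c) * B $$ (i mod n, d) * v $ (c * s + d))"
proof -
  have "(c * s + d) div s = c" and "(c * s + d) mod s = d" if "d < s" for c d
    using that by simp_all
  then show ?thesis
    using assms by (auto simp: index_kron_mat scalar_prod_def atLeast0LessThan sum_lessThan_mult
        mult_add_less_mult intro!: sum.cong)
qed

lemma upper_triangular_kron_mat:
  fixes A B :: "'a::semiring_0 mat"
  assumes "A \<in> carrier_mat r r" and "B \<in> carrier_mat s s"
    and "upper_triangular A" and "upper_triangular B"
  shows "upper_triangular (kron_mat A B)"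
  unfolding upper_triangular_def
proof (intro allI impI)
  fix i j
  assume "i < dim_row (kron_mat A B)" and "j < i"
  then have i: "i < r * s" and j: "j < r * s"
    using assms(1,2) by simp_all
  note bounds = div_mod_less_mult[OF i] div_mod_less_mult[OF j]
  have "j div s \<le> i div s"
    using \<open>j < i\<close> by (simp add: div_le_mono)
  moreover have "j mod s < i mod s" if "j div s = i div s"
    using \<open>j < i\<close> that by (metis div_mult_mod_eq add_less_cancel_left)
  ultimately show "kron_mat A B $$ (i, j) = 0"
    using assms bounds i j by (cases "j div s = i div s") (auto simp: index_kron_mat upper_triangular_def)
qed

lemma jordan_block_row_sum:
  fixes e :: "'a::comm_ring_1"
  assumes "a < n"
  shows "(\<Sum>c<n. jordan_block n e $$ (a, c) * h c) = e * h a + (if Suc a < n then h (Suc a) else 0)"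
proof -
  have "(\<Sum>c<n. jordan_block n e $$ (a, c) * h c) =
      (\<Sum>c<n. (if c = a then e * h c else 0) + (if c = Suc a then h c else 0))"
    using assms by (intro sum.cong) auto
  then show ?thesis
    using assms by (simp add: sum.distrib)
qed

lemma mult_mat_vec_unit_vec:
  fixes A :: "'a::semiring_1 mat"
  assumes "A \<in> carrier_mat n m" and "j < m"
  shows "A *\<^sub>v unit_vec m j = col A j"
  using assms by (intro eq_vecI) auto

lemma jordan_matrix_replicate_index:
  assumes "k < r * s" and "j < r * s"
  shows "jordan_matrix (replicate r (s, e)) $$ (k, j) =
    (if k = j then e else if Suc k = j \<and> j mod s \<noteq> 0 then 1 else 0)"
  using assms
proof (induct r arbitrary: k j)
  case (Suc r)
  have "jordan_matrix (replicate (Suc r) (s, e)) = four_block_mat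
      (jordan_block s e) (0\<^sub>m s (r * s)) (0\<^sub>m (r * s) s) (jordan_matrix (replicate r (s, e)))"
    by (simp add: jordan_matrix_Cons sum_list_replicate)
  then show ?case
    using Suc.prems Suc.hyps[of "k - s" "j - s"]
    by (auto simp: sum_list_replicate le_mod_geq[of s j] not_less)
qed simp

lemma col_jordan_matrix_replicate:
  fixes e :: "'a::comm_ring_1"
  assumes "j < r * s"
  shows "col (jordan_matrix (replicate r (s, e))) j =
    (if j mod s = 0 then e \<cdot>\<^sub>v unit_vec (r * s) j
     else e \<cdot>\<^sub>v unit_vec (r * s) j + unit_vec (r * s) (j - 1))"
  using assms by (intro eq_vecI) (auto simp: jordan_matrix_replicate_index sum_list_replicate)

lemma jordan_nf_dim:
  assumes "jordan_nf A n_as"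
  shows "dim_row A = sum_list (map fst n_as)"
  using assms similar_matD unfolding jordan_nf_def by fastforce

lemma jordan_sizes_eq_replicate:
  fixes A :: "'a::field mat"
  assumes jnf: "jordan_nf A (replicate r (s, e))" and "0 < s"
  shows "jordan_sizes A = replicate r s"
proof -
  define n_as where "n_as = (SOME n_as. jordan_nf A n_as)"
  have jnf': "jordan_nf A n_as"
    unfolding n_as_def using jnf by (rule someI)
  then have "set n_as = set (replicate r (s, e))"
    using jnf by (rule jordan_nf_unique)
  then have sizes: "map fst n_as = replicate (length n_as) s"
    by (intro replicate_eqI) (auto split: if_splits)
  have "sum_list (map fst n_as) = r * s"
    using jordan_nf_dim[OF jnf'] jordan_nf_dim[OF jnf] by (simp add: sum_list_replicate)
  then have "length n_as = r"
    using \<open>0 < s\<close> by (simp add: sizes sum_list_replicate)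
  then show ?thesis
    using sizes by (simp add: jordan_sizes_def flip: n_as_def)
qed

lemma jordan_nf_block_root_char_poly:
  assumes "jordan_nf A n_as" and "(n, a) \<in> set n_as"
  shows "poly (char_poly A) a = 0"
proof -
  have "n \<noteq> 0"
    using assms unfolding jordan_nf_def by force
  obtain xs ys where "n_as = xs @ (n, a) # ys"
    using assms(2) by (meson split_list)
  then show ?thesis
    using \<open>n \<noteq> 0\<close> by (simp add: jordan_nf_char_poly[OF assms(1)] power_0_left)
qed

lemma char_matrix_jordan_matrix_pow_eq_0:
  fixes n_as :: "(nat \<times> 'a::field) list"
  assumes "\<forall>(n, a) \<in> set n_as. n \<le> k \<and> a = e"
  shows "char_matrix (jordan_matrix n_as) e ^\<^sub>m k
    = 0\<^sub>m (sum_list (map fst n_as)) (sum_list (map fst n_as))"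
  using assms
proof (induct n_as)
  case Nil
  show ?case
    by (rule eq_matI) (auto simp: char_matrix_def)
next
  case (Cons na n_as)
  obtain n where na: "na = (n, e)" and "n \<le> k"
    using Cons.prems by (cases na) auto
  define d where "d = sum_list (map fst n_as)"
  have C: "char_matrix (jordan_block n e) e \<in> carrier_mat n n"
    by (rule char_matrix_closed[OF jordan_block_carrier])
  have D: "char_matrix (jordan_matrix n_as) e \<in> carrier_mat d d"
    unfolding d_def by (rule char_matrix_closed[OF jordan_matrix_carrier])
  have "char_matrix (jordan_matrix (na # n_as)) e =
      four_block_mat (char_matrix (jordan_block n e) e) (0\<^sub>m n d) (0\<^sub>m d n)
        (char_matrix (jordan_matrix n_as) e)"
    unfolding na jordan_matrix_Cons d_def char_matrix_def by (intro eq_matI) auto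
  moreover have "char_matrix (jordan_block n e) e ^\<^sub>m k = 0\<^sub>m n n"
    using \<open>n \<le> k\<close> by (intro eq_matI) (auto simp: char_matrix_jordan_block jordan_block_zero_pow)
  moreover have "four_block_mat (0\<^sub>m n n) (0\<^sub>m n d) (0\<^sub>m d n) (0\<^sub>m d d) = (0\<^sub>m (n + d) (n + d) :: 'a mat)"
    by (rule eq_matI) auto
  moreover have "sum_list (map fst (na # n_as)) = n + d"
    by (simp add: na d_def)
  ultimately show ?case
    using Cons unfolding d_def[symmetric] by (simp add: pow_four_block_mat[OF C D])
qed

lemma char_matrix_pow_eq_0_if_jordan_nf:
  fixes A :: "'a::field mat"
  assumes jnf: "jordan_nf A n_as" and A: "A \<in> carrier_mat n n"
    and blocks: "\<forall>(m, a) \<in> set n_as. m \<le> k \<and> a = e"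
  shows "char_matrix A e ^\<^sub>m k = 0\<^sub>m n n"
proof -
  obtain P Q where wit: "similar_mat_wit A (jordan_matrix n_as) P Q"
    using jnf unfolding jordan_nf_def similar_mat_def by blast
  then have P: "P \<in> carrier_mat n n" and Q: "Q \<in> carrier_mat n n"
    using similar_mat_witD2[OF A] by auto
  have "sum_list (map fst n_as) = n"
    using jordan_nf_dim[OF jnf] A by simp
  then have "char_matrix (jordan_matrix n_as) e ^\<^sub>m k = 0\<^sub>m n n"
    using char_matrix_jordan_matrix_pow_eq_0[OF blocks] by simp
  then have "char_matrix A e ^\<^sub>m k = P * 0\<^sub>m n n * Q"
    using similar_mat_wit_pow_id[OF similar_mat_wit_char_matrix[OF wit]] by simp
  then show ?thesis
    using P Q by simp
qed

section \<open>The algebra A = F[X,Y]/(X^r, Y^s)\<close>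

definition coeff_xy :: "'a::comm_ring_1 poly poly \<Rightarrow> nat \<Rightarrow> nat \<Rightarrow> 'a" where
  "coeff_xy P a b = coeff (coeff P b) a"

lemma coeff_xy_add [simp]: "coeff_xy (P + Q) a b = coeff_xy P a b + coeff_xy Q a b"
  and coeff_xy_diff [simp]: "coeff_xy (P - Q) a b = coeff_xy P a b - coeff_xy Q a b"
  by (simp_all add: coeff_xy_def)

lemma coeff_xy_varX_mult:
  "coeff_xy (varX * P) a b = (if a = 0 then 0 else coeff_xy P (a - 1) b)"
  by (cases a) (simp_all add: coeff_xy_def varX_def)

lemma coeff_xy_varY_mult:
  "coeff_xy (varY * P) a b = (if b = 0 then 0 else coeff_xy P a (b - 1))"
  by (cases b) (simp_all add: coeff_xy_def varY_def)

lemma coeff_xy_smult: "coeff_xy (Polynomial.smult g P) a b = coeff (g * coeff P b) a"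
  by (simp add: coeff_xy_def)

lemma varX_power: "varX ^ n = [:monom 1 n:]"
  by (induct n) (simp_all add: varX_def monom_Suc mult.commute)

lemma varY_power: "varY ^ n = monom 1 n"
  by (simp add: varY_def monom_altdef)

lemma coeff_xy_varX_power: "coeff_xy (varX ^ n) a b = (if a = n \<and> b = 0 then 1 else 0)"
  by (simp add: coeff_xy_def varX_power coeff_pCons split: nat.split)

lemma in_ideal_XY_0 [simp]: "in_ideal_XY r s 0"
  unfolding in_ideal_XY_def by (intro exI[of _ 0]) simp

lemma in_ideal_XY_add:
  assumes "in_ideal_XY r s P" and "in_ideal_XY r s Q"
  shows "in_ideal_XY r s (P + Q)"
proof -
  obtain a b c d where "P = a * varX ^ r + b * varY ^ s" and "Q = c * varX ^ r + d * varY ^ s"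
    using assms unfolding in_ideal_XY_def by blast
  then have "P + Q = (a + c) * varX ^ r + (b + d) * varY ^ s"
    by (simp add: algebra_simps)
  then show ?thesis
    unfolding in_ideal_XY_def by blast
qed

lemma in_ideal_XY_mult_left:
  assumes "in_ideal_XY r s P"
  shows "in_ideal_XY r s (Q * P)"
proof -
  obtain a b where "P = a * varX ^ r + b * varY ^ s"
    using assms unfolding in_ideal_XY_def by blast
  then have "Q * P = (Q * a) * varX ^ r + (Q * b) * varY ^ s"
    by (simp add: algebra_simps)
  then show ?thesis
    unfolding in_ideal_XY_def by blast
qed

lemma in_ideal_XY_mult_right: "in_ideal_XY r s P \<Longrightarrow> in_ideal_XY r s (P * Q)"
  using in_ideal_XY_mult_left[of r s P Q] by (simp add: mult.commute)

lemma in_ideal_XY_diff: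
  "in_ideal_XY r s P \<Longrightarrow> in_ideal_XY r s Q \<Longrightarrow> in_ideal_XY r s (P - Q)"
  using in_ideal_XY_add[of r s P "(-1) * Q"] in_ideal_XY_mult_left[of r s Q "-1"] by simp

lemma in_ideal_XY_sum:
  "(\<And>i. i \<in> I \<Longrightarrow> in_ideal_XY r s (f i)) \<Longrightarrow> in_ideal_XY r s (\<Sum>i\<in>I. f i)"
  by (induct I rule: infinite_finite_induct) (simp_all add: in_ideal_XY_add)

lemma in_ideal_XY_varX_power:
  assumes "r \<le> k"
  shows "in_ideal_XY r s (varX ^ k)"
proof -
  have "varX ^ k = varX ^ (k - r) * varX ^ r + 0 * varY ^ s"
    using assms by (simp flip: power_add)
  then show ?thesis
    unfolding in_ideal_XY_def by blast
qed

lemma in_ideal_XY_varY_power: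
  assumes "s \<le> k"
  shows "in_ideal_XY r s (varY ^ k)"
proof -
  have "varY ^ k = 0 * varX ^ r + varY ^ (k - s) * varY ^ s"
    using assms by (simp flip: power_add)
  then show ?thesis
    unfolding in_ideal_XY_def by blast
qed

lemma coeff_xy_in_ideal_XY:
  assumes "in_ideal_XY r s P" and "a < r" and "b < s"
  shows "coeff_xy P a b = 0"
proof -
  obtain A B where P: "P = A * varX ^ r + B * varY ^ s"
    using assms(1) unfolding in_ideal_XY_def by blast
  have "coeff (B * varY ^ s) b = 0"
    using assms(3) by (simp add: varY_power mult.commute[of B] coeff_monom_mult)
  moreover have "coeff (A * varX ^ r) b = monom 1 r * coeff A b"
    by (simp add: varX_power)
  ultimately show ?thesis
    using assms(2) by (simp add: P coeff_xy_def coeff_monom_mult)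
qed

lemma in_ideal_XY_varX_add_power:
  fixes W :: "'a::comm_ring_1 poly poly"
  assumes p: "prime CHAR('a)" and r: "r \<le> CHAR('a) ^ m" and "CHAR('a) ^ m dvd s"
    and W: "in_ideal_XY r s (W ^ s)"
  shows "in_ideal_XY r s ((varX + W) ^ s)"
proof -
  define q where "q = CHAR('a) ^ m"
  obtain t where s: "s = q * t"
    using assms(3) unfolding q_def by blast
  have "(varX + W) ^ s = (\<Sum>k\<le>t. of_nat (t choose k) * varX ^ (q * k) * W ^ (q * (t - k)))"
    using power_add_prime_power_mult[of varX W m t] p by (simp add: s q_def)
  also have "in_ideal_XY r s \<dots>"
  proof (rule in_ideal_XY_sum)
    fix k
    show "in_ideal_XY r s (of_nat (t choose k) * varX ^ (q * k) * W ^ (q * (t - k)))"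
    proof (cases "k = 0")
      case True
      then have "of_nat (t choose k) * varX ^ (q * k) * W ^ (q * (t - k)) = 1 * W ^ s"
        by (simp add: s)
      then show ?thesis
        using in_ideal_XY_mult_left[OF W] by metis
    next
      case False
      then have "r \<le> q * k"
        using r unfolding q_def by (simp add: le_trans)
      then show ?thesis
        using in_ideal_XY_mult_right[OF in_ideal_XY_mult_left[OF in_ideal_XY_varX_power]]
        by blast
    qed
  qed
  finally show ?thesis .
qed

abbreviation varT :: "'a::comm_ring_1 poly poly" where
  "varT \<equiv> varX + varY"

definition varZ :: "'a::comm_ring_1 poly poly" where
  "varZ = varX + varY + varX * varY"

lemma coeff_xy_varZ_mult:
  "coeff_xy (varZ * P) a b =
     (if a = 0 then 0 else coeff_xy P (a - 1) b) + (if b = 0 then 0 else coeff_xy P a (b - 1))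
     + (if a = 0 \<or> b = 0 then 0 else coeff_xy P (a - 1) (b - 1))"
  by (simp add: varZ_def distrib_right mult.assoc coeff_xy_varX_mult coeff_xy_varY_mult)

lemma in_ideal_XY_varT_power:
  assumes "prime CHAR('a::comm_ring_1)" and "r \<le> CHAR('a) ^ m" and "CHAR('a) ^ m dvd s"
  shows "in_ideal_XY r s (varT ^ s :: 'a poly poly)"
  using assms by (intro in_ideal_XY_varX_add_power in_ideal_XY_varY_power) simp_all

lemma in_ideal_XY_varZ_power:
  assumes "prime CHAR('a::comm_ring_1)" and "r \<le> CHAR('a) ^ m" and "CHAR('a) ^ m dvd s"
  shows "in_ideal_XY r s (varZ ^ s :: 'a poly poly)"
proof -
  have "in_ideal_XY r s ((1 + varX) ^ s * varY ^ s :: 'a poly poly)"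
    by (rule in_ideal_XY_mult_left[OF in_ideal_XY_varY_power]) simp
  then have "in_ideal_XY r s ((varY * (1 + varX)) ^ s :: 'a poly poly)"
    by (simp add: power_mult_distrib mult.commute)
  then have "in_ideal_XY r s ((varX + varY * (1 + varX)) ^ s :: 'a poly poly)"
    using assms by (rule in_ideal_XY_varX_add_power[rotated 3])
  then show ?thesis
    by (simp add: varZ_def algebra_simps)
qed

section \<open>The subalgebra F[x + y]\<close>

interpretation subst_xy: comm_ring_hom "subst_xy :: 'a::comm_ring_1 poly \<Rightarrow> _"
proof -
  interpret const: comm_ring_hom "\<lambda>c::'a. [:[:c:]:]"
    by unfold_locales (simp_all add: one_pCons)
  interpret map_const: map_poly_comm_ring_hom "\<lambda>c::'a. [:[:c:]:]" ..
  show "comm_ring_hom (subst_xy :: 'a poly \<Rightarrow> _)"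
    by unfold_locales (simp_all add: subst_xy_def map_const.hom_add map_const.hom_mult)
qed

lemma subst_xy_const: "subst_xy [:c:] = [:[:c:]:]"
  unfolding subst_xy_def by (cases "c = 0") (simp_all add: map_poly_pCons)

lemma subst_xy_var: "subst_xy [:0, 1:] = varT"
  by (simp add: subst_xy_def flip: one_pCons)

lemma subst_xy_eq_sum:
  assumes "degree f \<le> N"
  shows "subst_xy f = (\<Sum>k\<le>N. [:[:coeff f k:]:] * varT ^ k)"
proof -
  have "degree (map_poly (\<lambda>c. [:[:c:]:]) f :: 'a poly poly poly) \<le> N"
    using order.trans[OF map_poly_degree_leq assms] .
  then show ?thesis
    unfolding subst_xy_def by (simp add: poly_eq_sum_atMost coeff_map_poly)
qed

lemma poly_subst_xy_const: "poly (map_poly subst_xy (map_poly (\<lambda>a. [:a:]) c)) varX = [:c:]"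
  by (induct c) (simp_all add: map_poly_pCons subst_xy_const varX_def)

lemma ex_poly_varX_over_subst_xy: "\<exists>G. P = poly (map_poly subst_xy G) varX"
proof (induct P)
  case 0
  show ?case by (intro exI[of _ 0]) simp
next
  case (pCons c Q)
  interpret map_poly_comm_ring_hom subst_xy ..
  obtain G where G: "Q = poly (map_poly subst_xy G) varX"
    using pCons(2) by blast
  have "pCons c Q = [:c:] + (varT - varX) * Q"
    by (simp add: varY_def)
  also have "\<dots> = poly (map_poly subst_xy
      (map_poly (\<lambda>a. [:a:]) c + ([:[:0, 1:]:] - [:0, 1:]) * G)) varX"
    unfolding hom_add hom_mult hom_minus poly_hom.hom_add poly_hom.hom_mult poly_hom.hom_minus
    by (simp add: poly_subst_xy_const G subst_xy_const subst_xy_var map_poly_pCons)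
  finally show ?case by blast
qed

lemma ex_cong_sum_varX_power_subst_xy:
  "\<exists>f. in_ideal_XY r s (P - (\<Sum>i<r. varX ^ i * subst_xy (f i)))"
proof -
  obtain G where G: "P = poly (map_poly subst_xy G) varX"
    using ex_poly_varX_over_subst_xy by blast
  define N where "N = max (degree G) r"
  have "degree (map_poly subst_xy G) \<le> N"
    using map_poly_degree_leq[of subst_xy G] unfolding N_def by linarith
  then have "P = (\<Sum>i\<le>N. varX ^ i * subst_xy (coeff G i))"
    unfolding G by (simp add: poly_eq_sum_atMost coeff_map_poly mult.commute)
  also have "\<dots> = (\<Sum>i<r. varX ^ i * subst_xy (coeff G i))
      + (\<Sum>i\<in>{r..N}. varX ^ i * subst_xy (coeff G i))"
    unfolding N_def by (subst sum.union_disjoint[symmetric]) (auto intro: sum.cong)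
  finally have "P - (\<Sum>i<r. varX ^ i * subst_xy (coeff G i))
      = (\<Sum>i\<in>{r..N}. varX ^ i * subst_xy (coeff G i))"
    by simp
  moreover have "in_ideal_XY r s (\<Sum>i\<in>{r..N}. varX ^ i * subst_xy (coeff G i))"
    by (intro in_ideal_XY_sum in_ideal_XY_mult_right in_ideal_XY_varX_power) simp
  ultimately show ?thesis
    by metis
qed

lemma in_ideal_XY_mult_varT_power:
  assumes "in_ideal_XY r s (varT ^ s :: 'a::comm_ring_1 poly poly)" and "s \<le> k"
  shows "in_ideal_XY r s (Q * varT ^ k :: 'a poly poly)"
proof -
  have "Q * varT ^ k = (Q * varT ^ (k - s)) * varT ^ s"
    using assms(2) by (simp add: mult.assoc flip: power_add)
  also have "in_ideal_XY r s \<dots>"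
    by (rule in_ideal_XY_mult_left[OF assms(1)])
  finally show ?thesis .
qed

lemma subst_xy_in_ideal_XY:
  assumes T: "in_ideal_XY r s (varT ^ s :: 'a::comm_ring_1 poly poly)"
    and low: "\<forall>k<s. coeff f k = 0"
  shows "in_ideal_XY r s (subst_xy f :: 'a poly poly)"
  unfolding subst_xy_eq_sum[OF order.refl]
proof (rule in_ideal_XY_sum)
  fix k
  show "in_ideal_XY r s ([:[:coeff f k:]:] * varT ^ k)"
    using low in_ideal_XY_mult_varT_power[OF T, of k "[:[:coeff f k:]:]"] by (cases "k < s") simp_all
qed

lemma subst_xy_mult_varT_power_cong:
  assumes T: "in_ideal_XY r s (varT ^ s :: 'a::comm_ring_1 poly poly)"
    and j: "j < s" and low: "\<forall>k<j. coeff f k = 0"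
  shows "in_ideal_XY r s (subst_xy f * varT ^ (s - 1 - j) - [:[:coeff f j:]:] * varT ^ (s - 1)
    :: 'a poly poly)"
proof -
  define N where "N = max (degree f) j"
  let ?g = "\<lambda>k. [:[:coeff f k:]:] * varT ^ (k + (s - 1 - j))"
  have "degree f \<le> N"
    by (simp add: N_def)
  then have "subst_xy f * varT ^ (s - 1 - j) = (\<Sum>k\<le>N. ?g k)"
    by (simp only: subst_xy_eq_sum sum_distrib_right mult.assoc power_add)
  also have "\<dots> = ?g j + (\<Sum>k\<in>{..N} - {j}. ?g k)"
    by (rule sum.remove) (simp_all add: N_def)
  finally have "subst_xy f * varT ^ (s - 1 - j) - [:[:coeff f j:]:] * varT ^ (s - 1)
      = (\<Sum>k\<in>{..N} - {j}. ?g k)"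
    using j by simp
  also have "in_ideal_XY r s \<dots>"
  proof (rule in_ideal_XY_sum)
    fix k
    assume "k \<in> {..N} - {j}"
    then show "in_ideal_XY r s (?g k)"
      using low in_ideal_XY_mult_varT_power[OF T, of "k + (s - 1 - j)" "[:[:coeff f k:]:]"] j
      by (cases "k < j") auto
  qed
  finally show ?thesis .
qed

lemma varT_eq: "varT = [:[:0, 1:], 1:]"
  by (simp add: varX_def varY_def)

lemma const_mult_varT_power_notin_ideal_XY:
  assumes "i < r" and "coeff g i \<noteq> 0" and "0 < s"
  shows "\<not> in_ideal_XY r s ([:g:] * varT ^ (s - 1))"
proof
  assume "in_ideal_XY r s ([:g:] * varT ^ (s - 1))"
  then have "coeff_xy ([:g:] * varT ^ (s - 1)) i (s - 1) = 0"
    by (rule coeff_xy_in_ideal_XY) (use assms in simp_all)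
  moreover have "coeff_xy ([:g:] * varT ^ (s - 1)) i (s - 1) = coeff g i"
    by (simp add: coeff_xy_smult varT_eq coeff_linear_power)
  ultimately show False
    using assms(2) by simp
qed

lemma varX_power_mult_varT_power_notin_ideal_XY:
  assumes "i < r" and "0 < s"
  shows "\<not> in_ideal_XY r s (varX ^ i * varT ^ (s - 1) :: 'a::comm_ring_1 poly poly)"
  using const_mult_varT_power_notin_ideal_XY[of i r "monom 1 i" s] assms by (simp add: varX_power)

text \<open>If some f i has a nonzero coefficient below degree s, let j be the least such degree and
  c_i the coefficient of degree j in f i. Multiplying the sum by (x + y)^(s - 1 - j) leaves
  \<Sum>i. c_i x^i (x + y)^(s - 1) modulo the ideal, whose coefficient at x^i y^(s - 1) is c_i.\<close>

lemma in_ideal_XY_summand_of_sum_varX_power_subst_xy: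
  fixes f :: "nat \<Rightarrow> 'a::comm_ring_1 poly"
  assumes T: "in_ideal_XY r s (varT ^ s :: 'a poly poly)" and s: "0 < s"
    and sum: "in_ideal_XY r s (\<Sum>i<r. varX ^ i * subst_xy (f i))"
    and i: "i < r"
  shows "in_ideal_XY r s (varX ^ i * subst_xy (f i))"
proof -
  have "\<forall>i<r. \<forall>k<s. coeff (f i) k = 0"
  proof (rule ccontr)
    assume nonzero: "\<not> ?thesis"
    define P where "P k \<longleftrightarrow> k < s \<and> (\<exists>i<r. coeff (f i) k \<noteq> 0)" for k
    have "\<exists>k. P k"
      using nonzero unfolding P_def by blast
    then obtain j where "P j" and least: "\<And>k. k < j \<Longrightarrow> \<not> P k"
      using exists_least_iff[of P] by blast
    then have j: "j < s" "\<exists>i<r. coeff (f i) j \<noteq> 0"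
      unfolding P_def by blast+
    have low: "\<forall>k<j. \<forall>i<r. coeff (f i) k = 0"
      using least j(1) unfolding P_def by auto
    obtain i1 where i1: "i1 < r" "coeff (f i1) j \<noteq> 0"
      using j(2) by blast
    define c where "c i = coeff (f i) j" for i
    let ?A = "(\<Sum>i<r. varX ^ i * subst_xy (f i)) * varT ^ (s - 1 - j)"
    let ?B = "\<Sum>i<r. varX ^ i * (subst_xy (f i) * varT ^ (s - 1 - j) - [:[:c i:]:] * varT ^ (s - 1))"
    have "in_ideal_XY r s (?A - ?B)"
      unfolding c_def
      by (intro in_ideal_XY_diff in_ideal_XY_mult_right[OF sum] in_ideal_XY_sum
          in_ideal_XY_mult_left subst_xy_mult_varT_power_cong[OF T j(1)]) (use low in simp)
    moreover have "?A - ?B = [:\<Sum>i<r. monom (c i) i:] * varT ^ (s - 1)"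
    proof -
      have "?A - ?B = (\<Sum>i<r. varX ^ i * [:[:c i:]:] * varT ^ (s - 1))"
        by (simp add: sum_distrib_right right_diff_distrib mult.assoc flip: sum_subtractf)
      also have "\<dots> = (\<Sum>i<r. [:monom (c i) i:]) * varT ^ (s - 1)"
        by (simp add: sum_distrib_right varX_power smult_monom)
      finally show ?thesis
        by (simp only: sum_to_poly)
    qed
    moreover have "coeff (\<Sum>i<r. monom (c i) i) i1 \<noteq> 0"
      using i1 by (simp add: c_def coeff_sum)
    ultimately show False
      using const_mult_varT_power_notin_ideal_XY[OF i1(1) _ s] by metis
  qed
  then show ?thesis
    using i by (intro in_ideal_XY_mult_left subst_xy_in_ideal_XY[OF T]) simp
qed

lemma direct_sum_decomp_if_varT_power_in_ideal_XY:
  assumes "in_ideal_XY r s (varT ^ s :: 'a::comm_ring_1 poly poly)" and "0 < s"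
  shows "direct_sum_decomp TYPE('a) r s"
  unfolding direct_sum_decomp_def
  using ex_cong_sum_varX_power_subst_xy in_ideal_XY_summand_of_sum_varX_power_subst_xy[OF assms]
  by blast

section \<open>The action of J_r \<otimes> J_s on A\<close>

text \<open>In this reversed order the superdiagonal of J_n raises degrees, so that
  J_r \<otimes> J_s acts as multiplication by (1 + x)(1 + y) = 1 + varZ.\<close>

definition coeff_vec :: "nat \<Rightarrow> nat \<Rightarrow> 'a::comm_ring_1 poly poly \<Rightarrow> 'a vec" where
  "coeff_vec r s P = vec (r * s) (\<lambda>i. coeff_xy P (r - 1 - i div s) (s - 1 - i mod s))"

lemma coeff_vec_carrier [simp]: "coeff_vec r s P \<in> carrier_vec (r * s)"
  and dim_coeff_vec [simp]: "dim_vec (coeff_vec r s P) = r * s"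
  by (simp_all add: coeff_vec_def)

lemma index_coeff_vec:
  "i < r * s \<Longrightarrow> coeff_vec r s P $ i = coeff_xy P (r - 1 - i div s) (s - 1 - i mod s)"
  by (simp add: coeff_vec_def)

lemma coeff_vec_add: "coeff_vec r s (P + Q) = coeff_vec r s P + coeff_vec r s Q"
  and coeff_vec_diff: "coeff_vec r s (P - Q) = coeff_vec r s P - coeff_vec r s Q"
  by (auto simp: coeff_vec_def)

lemma coeff_vec_in_ideal_XY:
  assumes "in_ideal_XY r s P"
  shows "coeff_vec r s P = 0\<^sub>v (r * s)"
proof (rule eq_vecI)
  fix i
  assume "i < dim_vec (0\<^sub>v (r * s) :: 'a vec)"
  then have "i div s < r" and "i mod s < s"
    using div_mod_less_mult by auto
  then show "coeff_vec r s P $ i = 0\<^sub>v (r * s) $ i"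
    using \<open>i < _\<close> by (simp add: index_coeff_vec coeff_xy_in_ideal_XY[OF assms])
qed simp

lemma coeff_xy_eq_0_if_coeff_vec_eq_0:
  assumes "coeff_vec r s P = 0\<^sub>v (r * s)" and "a < r" and "b < s"
  shows "coeff_xy P a b = 0"
proof -
  define c d where "c = r - 1 - a" and "d = s - 1 - b"
  have "c < r" and "d < s"
    using assms(2,3) by (simp_all add: c_def d_def)
  then have i: "c * s + d < r * s" and "(c * s + d) div s = c" and "(c * s + d) mod s = d"
    by (simp_all add: mult_add_less_mult)
  then show ?thesis
    using assms index_coeff_vec[OF i, of P] by (simp add: c_def d_def)
qed

lemma kron_jordan_block_carrier: "kron_mat (J r) (J s) \<in> carrier_mat (r * s) (r * s)"
  unfolding carrier_mat_def by simp

lemma kron_jordan_block_mult_coeff_vec: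
  "kron_mat (J r) (J s) *\<^sub>v coeff_vec r s P = coeff_vec r s (P + varZ * P)"
proof (rule eq_vecI)
  fix i
  assume "i < dim_vec (coeff_vec r s (P + varZ * P))"
  then have i: "i < r * s" by simp
  define a b where "a = i div s" and "b = i mod s"
  have a: "a < r" and b: "b < s"
    using div_mod_less_mult[OF i] by (simp_all add: a_def b_def)
  define v where "v c d = coeff_xy P (r - 1 - c) (s - 1 - d)" for c d
  have "(kron_mat (J r) (J s) *\<^sub>v coeff_vec r s P) $ i =
      (\<Sum>c<r. \<Sum>d<s. J r $$ (a, c) * J s $$ (b, d) * coeff_vec r s P $ (c * s + d))"
    unfolding a_def b_def by (rule kron_mat_mult_vec_index) (use i in simp_all)
  also have "\<dots> = (\<Sum>c<r. J r $$ (a, c) * (\<Sum>d<s. J s $$ (b, d) * v c d))"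
  proof -
    have "coeff_vec r s P $ (c * s + d) = v c d" if "c < r" and "d < s" for c d
      using that by (simp add: index_coeff_vec v_def mult_add_less_mult)
    then show ?thesis
      unfolding sum_distrib_left by (intro sum.cong) (simp_all add: mult.assoc)
  qed
  also have "\<dots> = v a b + (if Suc b < s then v a (Suc b) else 0)
      + (if Suc a < r then v (Suc a) b + (if Suc b < s then v (Suc a) (Suc b) else 0) else 0)"
    by (simp only: jordan_block_row_sum[OF a] jordan_block_row_sum[OF b]) simp
  also have "\<dots> = coeff_vec r s (P + varZ * P) $ i"
    using a b i by (auto simp: index_coeff_vec coeff_xy_varZ_mult v_def Suc_diff_Suc
        simp flip: a_def b_def)
  finally show "(kron_mat (J r) (J s) *\<^sub>v coeff_vec r s P) $ i = coeff_vec r s (P + varZ * P) $ i" .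
qed simp

lemma char_matrix_kron_jordan_block_mult_coeff_vec:
  fixes P :: "'a::field poly poly"
  shows "char_matrix (kron_mat (J r) (J s)) 1 *\<^sub>v coeff_vec r s P = coeff_vec r s (varZ * P)"
proof -
  have "char_matrix (kron_mat (J r) (J s)) 1 = kron_mat (J r) (J s) - (1\<^sub>m (r * s) :: 'a mat)"
    using kron_jordan_block_carrier[of r s] by (intro eq_matI) (auto simp: char_matrix_def)
  then have "char_matrix (kron_mat (J r) (J s)) 1 *\<^sub>v coeff_vec r s P
      = kron_mat (J r) (J s) *\<^sub>v coeff_vec r s P - 1\<^sub>m (r * s) *\<^sub>v coeff_vec r s P"
    using minus_mult_distrib_mat_vec[OF kron_jordan_block_carrier one_carrier_mat coeff_vec_carrier]
    by simp
  also have "\<dots> = coeff_vec r s (varZ * P)"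
    unfolding kron_jordan_block_mult_coeff_vec by (simp flip: coeff_vec_diff)
  finally show ?thesis .
qed

lemma char_matrix_kron_jordan_block_pow_mult_coeff_vec:
  fixes P :: "'a::field poly poly"
  shows "(char_matrix (kron_mat (J r) (J s)) 1 ^\<^sub>m k) *\<^sub>v coeff_vec r s P
    = coeff_vec r s (varZ ^ k * P)"
proof -
  have C: "char_matrix (kron_mat (J r) (J s) :: 'a mat) 1 \<in> carrier_mat (r * s) (r * s)"
    by (rule char_matrix_closed[OF kron_jordan_block_carrier])
  show ?thesis
  proof (induct k arbitrary: P)
    case 0
    then show ?case
      using C by simp
  next
    case (Suc k)
    then show ?case
      using Suc[of "varZ * P"]
      by (simp add: assoc_mult_mat_vec[OF pow_carrier_mat[OF C] C] mult_ac
          char_matrix_kron_jordan_block_mult_coeff_vec)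
  qed
qed

lemma char_poly_kron_jordan_block:
  "char_poly (kron_mat (J r) (J s) :: 'a::field mat) = [:-1, 1:] ^ (r * s)"
proof -
  have ut: "upper_triangular (kron_mat (J r) (J s) :: 'a mat)"
    by (rule upper_triangular_kron_mat) (auto simp: upper_triangular_def)
  have "diag_mat (kron_mat (J r) (J s) :: 'a mat) = replicate (r * s) 1"
    by (intro nth_equalityI) (simp_all add: diag_mat_def index_kron_mat div_mod_less_mult)
  then show ?thesis
    by (simp add: char_poly_upper_triangular[OF kron_jordan_block_carrier ut] prod_list_replicate)
qed

lemma jordan_sizes_le_if_eps_rs_eq_0:
  assumes "eps_rs TYPE('a::field) r s = replicate r 0"
  shows "\<forall>l \<in> set (jordan_sizes (kron_mat (J r) (J s) :: 'a mat)). l \<le> s"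
proof -
  have "set (map (\<lambda>l. int l - int s) (jordan_sizes (kron_mat (J r) (J s) :: 'a mat))) \<subseteq> {0}"
    using assms unfolding eps_rs_def lambda_rs_def by (simp add: set_replicate_conv_if)
  then show ?thesis
    by auto
qed

lemma varZ_power_vanishes_if_jordan_sizes_le:
  assumes sizes: "\<forall>l \<in> set (jordan_sizes (kron_mat (J r) (J s) :: 'a::field mat)). l \<le> s"
    and "a < r" and "b < s"
  shows "coeff_xy (varZ ^ s :: 'a poly poly) a b = 0"
proof -
  let ?M = "kron_mat (J r) (J s) :: 'a mat"
  define n_as where "n_as = (SOME n_as. jordan_nf ?M n_as)"
  have ut: "upper_triangular ?M"
    by (rule upper_triangular_kron_mat) (auto simp: upper_triangular_def)
  have jnf: "jordan_nf ?M n_as"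
    unfolding n_as_def by (rule someI, rule triangular_to_jnf_vector[OF kron_jordan_block_carrier ut])
  have "\<forall>(m, e) \<in> set n_as. m \<le> s \<and> e = 1"
  proof (intro ballI, clarify)
    fix m e
    assume me: "(m, e) \<in> set n_as"
    then have "m \<le> s"
      using sizes unfolding jordan_sizes_def n_as_def[symmetric] by force
    moreover have "poly (char_poly ?M) e = 0"
      by (rule jordan_nf_block_root_char_poly[OF jnf me])
    then have "e = 1"
      by (simp add: char_poly_kron_jordan_block)
    ultimately show "m \<le> s \<and> e = 1" ..
  qed
  then have "char_matrix ?M 1 ^\<^sub>m s = 0\<^sub>m (r * s) (r * s)"
    by (rule char_matrix_pow_eq_0_if_jordan_nf[OF jnf kron_jordan_block_carrier])
  moreover have "0\<^sub>m (r * s) (r * s) *\<^sub>v coeff_vec r s 1 = (0\<^sub>v (r * s) :: 'a vec)"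
    by (intro eq_vecI) auto
  ultimately have "coeff_vec r s (varZ ^ s * 1 :: 'a poly poly) = 0\<^sub>v (r * s)"
    using char_matrix_kron_jordan_block_pow_mult_coeff_vec[of r s s "1 :: 'a poly poly"] by simp
  then show ?thesis
    using assms(2,3) by (simp add: coeff_xy_eq_0_if_coeff_vec_eq_0)
qed

section \<open>A Jordan basis\<close>

lemma coeff_xy_varX_power_mult_varZ_power_nonzero:
  assumes "coeff_xy (varX ^ a * varZ ^ b :: 'a::comm_ring_1 poly poly) \<alpha> \<beta> \<noteq> 0"
  shows "a + b \<le> \<alpha> + \<beta> \<and> \<beta> \<le> b"
  using assms
proof (induct b arbitrary: \<alpha> \<beta>)
  case 0
  then show ?case
    by (simp add: coeff_xy_varX_power split: if_splits)
next
  case (Suc b)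
  let ?Q = "varX ^ a * varZ ^ b :: 'a poly poly"
  have eq: "varX ^ a * varZ ^ Suc b = varZ * ?Q"
    by (simp add: mult_ac)
  have "(\<alpha> \<noteq> 0 \<and> coeff_xy ?Q (\<alpha> - 1) \<beta> \<noteq> 0) \<or> (\<beta> \<noteq> 0 \<and> coeff_xy ?Q \<alpha> (\<beta> - 1) \<noteq> 0)
      \<or> (\<alpha> \<noteq> 0 \<and> \<beta> \<noteq> 0 \<and> coeff_xy ?Q (\<alpha> - 1) (\<beta> - 1) \<noteq> 0)"
    using Suc.prems unfolding eq by (auto simp: coeff_xy_varZ_mult split: if_splits)
  then show ?case
    using Suc.hyps[of "\<alpha> - 1" \<beta>] Suc.hyps[of \<alpha> "\<beta> - 1"] Suc.hyps[of "\<alpha> - 1" "\<beta> - 1"]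
    by auto
qed

lemma coeff_xy_varX_power_mult_varZ_power_diag:
  "coeff_xy (varX ^ a * varZ ^ b :: 'a::comm_ring_1 poly poly) a b = 1"
proof (induct b)
  case 0
  then show ?case
    by (simp add: coeff_xy_varX_power)
next
  case (Suc b)
  let ?Q = "varX ^ a * varZ ^ b :: 'a poly poly"
  have eq: "varX ^ a * varZ ^ Suc b = varZ * ?Q"
    by (simp add: mult_ac)
  have "a \<noteq> 0 \<Longrightarrow> coeff_xy ?Q (a - 1) (Suc b) = 0"
    and "a \<noteq> 0 \<Longrightarrow> coeff_xy ?Q (a - 1) b = 0"
    using coeff_xy_varX_power_mult_varZ_power_nonzero[of a b "a - 1"] by force+
  then show ?case
    unfolding eq using Suc by (simp add: coeff_xy_varZ_mult)
qed

text \<open>Column j of the change of basis is x^a z^b, with (a, b) indexed as in coeff_vec. Its lowest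
  monomial is x^a y^b, so the matrix is unitriangular; and 1 + z sends x^a z^b to
  x^a z^b + x^a z^(b+1), so once z^s = 0 in A these are r Jordan chains of length s.\<close>

definition jordan_basis_poly :: "nat \<Rightarrow> nat \<Rightarrow> nat \<Rightarrow> 'a::comm_ring_1 poly poly" where
  "jordan_basis_poly r s j = varX ^ (r - 1 - j div s) * varZ ^ (s - 1 - j mod s)"

definition jordan_basis_mat :: "nat \<Rightarrow> nat \<Rightarrow> 'a::comm_ring_1 mat" where
  "jordan_basis_mat r s = mat (r * s) (r * s) (\<lambda>(i, j). coeff_vec r s (jordan_basis_poly r s j) $ i)"

lemma jordan_basis_mat_carrier: "jordan_basis_mat r s \<in> carrier_mat (r * s) (r * s)"
  by (simp add: jordan_basis_mat_def)

lemma col_jordan_basis_mat: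
  "j < r * s \<Longrightarrow> col (jordan_basis_mat r s) j = coeff_vec r s (jordan_basis_poly r s j)"
  by (auto simp: jordan_basis_mat_def)

lemma upper_triangular_jordan_basis_mat: "upper_triangular (jordan_basis_mat r s)"
  unfolding upper_triangular_def
proof (intro allI impI)
  fix i j
  assume i: "i < dim_row (jordan_basis_mat r s)" and "j < i"
  then have i': "i < r * s" and j': "j < r * s"
    by (simp_all add: jordan_basis_mat_def)
  note bounds = div_mod_less_mult[OF i'] div_mod_less_mult[OF j']
  have "j div s \<le> i div s"
    using \<open>j < i\<close> by (simp add: div_le_mono)
  moreover have "j mod s < i mod s" if "j div s = i div s"
    using \<open>j < i\<close> that by (metis div_mult_mod_eq add_less_cancel_left)
  ultimately have "\<not> ((r - 1 - j div s) + (s - 1 - j mod s) \<le> (r - 1 - i div s) + (s - 1 - i mod s)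
      \<and> s - 1 - i mod s \<le> s - 1 - j mod s)"
    using bounds by linarith
  then show "jordan_basis_mat r s $$ (i, j) = 0"
    using coeff_xy_varX_power_mult_varZ_power_nonzero i' j'
    by (auto simp: jordan_basis_mat_def jordan_basis_poly_def index_coeff_vec)
qed

lemma det_jordan_basis_mat: "det (jordan_basis_mat r s) = 1"
proof -
  have "diag_mat (jordan_basis_mat r s) = replicate (r * s) (1 :: 'a)"
    by (intro nth_equalityI)
      (simp_all add: diag_mat_def jordan_basis_mat_def jordan_basis_poly_def index_coeff_vec
        coeff_xy_varX_power_mult_varZ_power_diag)
  then show ?thesis
    by (simp add: det_upper_triangular[OF upper_triangular_jordan_basis_mat jordan_basis_mat_carrier])
qed

lemma kron_jordan_block_mult_jordan_basis_mat:
  fixes r s :: nat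
  assumes Z: "in_ideal_XY r s (varZ ^ s :: 'a::field poly poly)"
  shows "kron_mat (J r) (J s) * jordan_basis_mat r s
    = jordan_basis_mat r s * (jordan_matrix (replicate r (s, 1)) :: 'a mat)"
proof -
  let ?M = "kron_mat (J r) (J s) :: 'a mat"
  let ?P = "jordan_basis_mat r s :: 'a mat"
  let ?JJ = "jordan_matrix (replicate r (s, 1)) :: 'a mat"
  let ?B = "jordan_basis_poly r s :: nat \<Rightarrow> 'a poly poly"
  have M: "?M \<in> carrier_mat (r * s) (r * s)"
    by (rule kron_jordan_block_carrier)
  have P: "?P \<in> carrier_mat (r * s) (r * s)"
    by (rule jordan_basis_mat_carrier)
  have JJ: "?JJ \<in> carrier_mat (r * s) (r * s)"
    using jordan_matrix_carrier[of "replicate r (s, 1 :: 'a)"] by (simp add: sum_list_replicate)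
  have cols: "col (?M * ?P) j = col (?P * ?JJ) j" if j: "j < r * s" for j
  proof -
    have "col (?M * ?P) j = coeff_vec r s (?B j + varZ * ?B j)"
      by (simp only: col_mult2[OF M P j] col_jordan_basis_mat[OF j] kron_jordan_block_mult_coeff_vec)
    also have "\<dots> = coeff_vec r s (?B j)
        + (if j mod s = 0 then 0\<^sub>v (r * s) else coeff_vec r s (?B (j - 1)))"
    proof (cases "j mod s = 0")
      case True
      have "0 < s"
        using j by (cases s) simp_all
      with True have "varZ * ?B j = varX ^ (r - 1 - j div s) * varZ ^ s"
        by (simp add: jordan_basis_poly_def mult_ac flip: power_Suc)
      then have "coeff_vec r s (varZ * ?B j) = 0\<^sub>v (r * s)"
        by (simp add: coeff_vec_in_ideal_XY in_ideal_XY_mult_left[OF Z])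
      then show ?thesis
        using True by (simp add: coeff_vec_add)
    next
      case False
      have "j - 1 = j div s * s + (j mod s - 1)"
        using False div_mult_mod_eq[of j s] by linarith
      moreover have "j mod s - 1 < s"
        using div_mod_less_mult(2)[OF j] by linarith
      ultimately have div: "(j - 1) div s = j div s" and "(j - 1) mod s = j mod s - 1"
        by simp_all
      then have "s - 1 - (j - 1) mod s = Suc (s - 1 - j mod s)"
        using False div_mod_less_mult(2)[OF j] by linarith
      then have "?B (j - 1) = varZ * ?B j"
        unfolding jordan_basis_poly_def div by (simp add: mult_ac)
      then show ?thesis
        using False by (simp add: coeff_vec_add)
    qed
    also have "\<dots> = ?P *\<^sub>v col ?JJ j"
      using j P
      by (simp add: col_jordan_matrix_replicate mult_add_distrib_mat_vec mult_mat_vec_unit_vec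
          col_jordan_basis_mat)
    also have "\<dots> = col (?P * ?JJ) j"
      by (rule col_mult2[OF P JJ j, symmetric])
    finally show ?thesis .
  qed
  show ?thesis
  proof (rule mat_col_eqI)
    fix j
    assume "j < dim_col (?P * ?JJ)"
    then have "j < r * s"
      by (simp add: sum_list_replicate)
    then show "col (?M * ?P) j = col (?P * ?JJ) j"
      by (rule cols)
  qed (use M P in \<open>simp_all add: sum_list_replicate\<close>)
qed

lemma jordan_nf_kron_jordan_block:
  assumes Z: "in_ideal_XY r s (varZ ^ s :: 'a::field poly poly)" and "0 < s"
  shows "jordan_nf (kron_mat (J r) (J s) :: 'a mat) (replicate r (s, 1))"
proof -
  let ?M = "kron_mat (J r) (J s) :: 'a mat"
  let ?P = "jordan_basis_mat r s :: 'a mat"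
  let ?JJ = "jordan_matrix (replicate r (s, 1)) :: 'a mat"
  have "det ?P \<noteq> 0"
    by (simp add: det_jordan_basis_mat)
  then obtain Q where Q: "Q \<in> carrier_mat (r * s) (r * s)" and PQ: "?P * Q = 1\<^sub>m (r * s)"
    and QP: "Q * ?P = 1\<^sub>m (r * s)"
    using det_non_zero_imp_unit[OF jordan_basis_mat_carrier] by (auto simp: Units_def ring_mat_def)
  have M: "?M \<in> carrier_mat (r * s) (r * s)"
    by (rule kron_jordan_block_carrier)
  have P: "?P \<in> carrier_mat (r * s) (r * s)"
    by (rule jordan_basis_mat_carrier)
  have JJ: "?JJ \<in> carrier_mat (r * s) (r * s)"
    using jordan_matrix_carrier[of "replicate r (s, 1 :: 'a)"] by (simp add: sum_list_replicate)
  have "?M = ?M * (?P * Q)"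
    using M by (simp add: PQ)
  also have "\<dots> = ?M * ?P * Q"
    using M P Q by (simp add: assoc_mult_mat)
  also have "\<dots> = ?P * ?JJ * Q"
    by (simp only: kron_jordan_block_mult_jordan_basis_mat[OF Z])
  finally have "similar_mat_wit ?M ?JJ ?P Q"
    by (rule similar_mat_witI[OF PQ QP _ M JJ P Q])
  then show ?thesis
    using \<open>0 < s\<close> unfolding jordan_nf_def similar_mat_def by auto
qed

lemma eps_rs_eq_0_if_varZ_power_in_ideal_XY:
  assumes "in_ideal_XY r s (varZ ^ s :: 'a::field poly poly)" and "0 < s"
  shows "eps_rs TYPE('a) r s = replicate r 0"
  using jordan_sizes_eq_replicate[OF jordan_nf_kron_jordan_block[OF assms] \<open>0 < s\<close>]
  by (simp add: eps_rs_def lambda_rs_def)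

section \<open>The coefficient obstruction\<close>

lemma coeff_xy_varZ_power:
  fixes v t :: nat
  assumes "prime CHAR('a::comm_ring_1)" and "0 < t"
  defines "q \<equiv> CHAR('a) ^ v"
  shows "coeff_xy (varZ ^ (q * t) :: 'a poly poly) q (q * (t - 1)) = of_nat t"
proof -
  define c where "c k = (of_nat (t choose k) :: 'a poly) * monom 1 (q * k) * [:1, 1:] ^ (q * (t - k))"
    for k
  have "q > 0"
    using assms(1) unfolding q_def by (simp add: prime_gt_0_nat)
  have one_plus_varX: "1 + varX = ([:[:1, 1:]:] :: 'a poly poly)"
    by (simp add: varX_def one_pCons)
  have "(varZ :: 'a poly poly) = varX + varY * (1 + varX)"
    by (simp add: varZ_def algebra_simps)
  then have "(varZ :: 'a poly poly) = varX + varY * [:[:1, 1:]:]"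
    by (simp only: one_plus_varX)
  then have "(varZ :: 'a poly poly) ^ (q * t) = (\<Sum>k\<le>t. of_nat (t choose k) * varX ^ (q * k)
      * (varY * [:[:1, 1:]:]) ^ (q * (t - k)))"
    using power_add_prime_power_mult[of "varX :: 'a poly poly" "varY * [:[:1, 1:]:]" v t] assms(1)
    by (simp add: q_def)
  also have "\<dots> = (\<Sum>k\<le>t. monom (c k) (q * (t - k)))"
    by (intro sum.cong refl)
      (simp add: c_def varX_power varY_power power_mult_distrib of_nat_poly poly_const_pow
        smult_monom smult_power mult.assoc)
  finally have Z: "(varZ :: 'a poly poly) ^ (q * t) = (\<Sum>k\<le>t. monom (c k) (q * (t - k)))" .
  have "coeff (varZ ^ (q * t) :: 'a poly poly) (q * (t - 1)) = (\<Sum>k\<le>t. if k = 1 then c k else 0)"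
    unfolding Z coeff_sum
  proof (intro sum.cong refl)
    fix k
    assume "k \<in> {..t}"
    then have "q * (t - k) = q * (t - 1) \<longleftrightarrow> k = 1"
      using \<open>q > 0\<close> \<open>0 < t\<close> by auto
    then show "coeff (monom (c k) (q * (t - k))) (q * (t - 1)) = (if k = 1 then c k else 0)"
      by simp
  qed
  also have "\<dots> = c 1"
    using \<open>0 < t\<close> by simp
  finally have "coeff (varZ ^ (q * t) :: 'a poly poly) (q * (t - 1)) = c 1" .
  moreover have "coeff (c 1) q = of_nat t"
    by (simp add: c_def of_nat_poly coeff_monom_mult mult.assoc flip: poly_0_coeff_0)
  ultimately show ?thesis
    by (simp add: coeff_xy_def)
qed

lemma le_power_multiplicity_if_varZ_power_vanishes:
  fixes r s :: nat
  assumes p: "prime CHAR('a::comm_ring_1)" and "0 < s"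
    and vanish: "\<forall>a<r. \<forall>b<s. coeff_xy (varZ ^ s :: 'a poly poly) a b = 0"
  shows "r \<le> CHAR('a) ^ multiplicity CHAR('a) s"
proof (rule ccontr)
  assume small: "\<not> ?thesis"
  define q where "q = CHAR('a) ^ multiplicity CHAR('a) s"
  obtain t where s: "s = q * t" and t: "\<not> CHAR('a) dvd t"
    using multiplicity_decompose'[of s "CHAR('a)"] p \<open>0 < s\<close> unfolding q_def
    by (metis gr_implies_not0 not_prime_unit)
  have "0 < t" and "0 < q"
    using s \<open>0 < s\<close> by simp_all
  have "coeff_xy (varZ ^ s :: 'a poly poly) q (q * (t - 1)) = of_nat t"
    using coeff_xy_varZ_power[OF p \<open>0 < t\<close>, of "multiplicity CHAR('a) s"]
    by (simp only: q_def[symmetric] s[symmetric])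
  moreover have "q < r"
    using small unfolding q_def by simp
  moreover have "q * (t - 1) < s"
    using s \<open>0 < t\<close> \<open>0 < q\<close> by simp
  ultimately have "of_nat t = (0 :: 'a)"
    using vanish by metis
  then show False
    using t by (simp add: of_nat_eq_0_iff_char_dvd)
qed

theorem lemma10:
  fixes p r s :: nat
  assumes "prime p" and "CHAR('a::field) = p" and "1 \<le> r" and "r \<le> s"
  defines "m \<equiv> LEAST m. r \<le> p ^ m"
  shows "(p ^ m dvd s \<longrightarrow>
            in_ideal_XY r s ((varX + varY) ^ s :: 'a poly poly) \<and>
            direct_sum_decomp TYPE('a) r s \<and>
            (\<forall>i<r. \<not> in_ideal_XY r s (varX ^ i * (varX + varY) ^ (s - 1) :: 'a poly poly)) \<and>
            eps_rs TYPE('a) r s = replicate r 0)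
       \<and> (eps_rs TYPE('a) r s = replicate r 0 \<longrightarrow> p ^ m dvd s)"
proof (intro conjI impI)
  have p: "prime CHAR('a)" and "0 < s"
    using assms by simp_all
  have r: "r \<le> p ^ m"
    unfolding m_def by (rule le_power_Least[OF prime_ge_2_nat[OF assms(1)]])
  {
    assume "p ^ m dvd s"
    then have T: "in_ideal_XY r s (varT ^ s :: 'a poly poly)"
      and Z: "in_ideal_XY r s (varZ ^ s :: 'a poly poly)"
      using in_ideal_XY_varT_power[OF p] in_ideal_XY_varZ_power[OF p] r assms(2) by simp_all
    show "in_ideal_XY r s (varT ^ s :: 'a poly poly)"
      by (fact T)
    show "direct_sum_decomp TYPE('a) r s"
      by (rule direct_sum_decomp_if_varT_power_in_ideal_XY[OF T \<open>0 < s\<close>])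
    show "\<forall>i<r. \<not> in_ideal_XY r s (varX ^ i * varT ^ (s - 1) :: 'a poly poly)"
      using varX_power_mult_varT_power_notin_ideal_XY \<open>0 < s\<close> by blast
    show "eps_rs TYPE('a) r s = replicate r 0"
      by (rule eps_rs_eq_0_if_varZ_power_in_ideal_XY[OF Z \<open>0 < s\<close>])
  }
  assume "eps_rs TYPE('a) r s = replicate r 0"
  then have "\<forall>a<r. \<forall>b<s. coeff_xy (varZ ^ s :: 'a poly poly) a b = 0"
    using varZ_power_vanishes_if_jordan_sizes_le jordan_sizes_le_if_eps_rs_eq_0 by blast
  then have "r \<le> p ^ multiplicity p s"
    using le_power_multiplicity_if_varZ_power_vanishes[OF p \<open>0 < s\<close>] assms(2) by simp
  then show "p ^ m dvd s"
    unfolding m_def by (intro multiplicity_dvd' Least_le)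
qed

end
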